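(* Let $D$ be a connected locally semicomplete digraph in which no inclusion-wise maximal weak hub is mixed. Then either $D$ is semicomplete with a universal vertex, or there exist $k\ge 2$ pairwise disjoint sets $X_1,\dots,X_k$ partitioning $V(D)$ such that each $D[X_i]$ is strongly connected and the digraph obtained by contracting every $X_i$ (vertices $X_1,\dots,X_k$, arc $X_iX_j$ for $i\ne j$ whenever $D$ has an arc from $X_i$ to $X_j$) is a round oriented graph.
   Context: Digraphs are finite, no loops, no parallel arcs; digons allowed; an oriented graph has no digon. $x^+$, $x^-$ are out- and in-neighbourhoods. Connected means the underlying undirected graph is connected. Semicomplete: any two distinct vertices joined by at least one arc; locally semicomplete: every $x^+$ and every $x^-$ induces a semicomplete digraph. A universal vertex is $x$ with $x^+=x^-=V(D)\setminus\{x\}$. A weak hub is a set $X\subseteq V(D)$ with $D[X]$ strongly connected such that some vertex $x$ satisfies $X\subseteq x^-\setminus x^+$ or $X\subseteq x^+\setminus x^-$. A weak hub $X$ is mixed if there exist $x\notin X$ and $u,v\in X$ such that $xu$ and $vx$ are arcs. An oriented graph is round if there is a cyclic order of its vertices such that for every arc $xy$ and every vertex $z$ strictly between $x$ and $y$ going forward from $x$ to $y$ in the cyclic order, both $xz$ and $zy$ are arcs. *)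

theory Defs
  imports Main
begin

definition digraph :: "'a set \<Rightarrow> ('a \<times> 'a) set \<Rightarrow> bool" where
  "digraph V A \<longleftrightarrow> finite V \<and> A \<subseteq> V \<times> V \<and> (\<forall>x. (x, x) \<notin> A)"

definition outN :: "('a \<times> 'a) set \<Rightarrow> 'a \<Rightarrow> 'a set" where
  "outN A x = {y. (x, y) \<in> A}"

definition inN :: "('a \<times> 'a) set \<Rightarrow> 'a \<Rightarrow> 'a set" where
  "inN A x = {y. (y, x) \<in> A}"

definition connected_dg :: "'a set \<Rightarrow> ('a \<times> 'a) set \<Rightarrow> bool" where
  "connected_dg V A \<longleftrightarrow> V \<noteq> {} \<and> (\<forall>u\<in>V. \<forall>v\<in>V. (u, v) \<in> (A \<union> A\<inverse>)\<^sup>*)"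

definition semicomplete :: "'a set \<Rightarrow> ('a \<times> 'a) set \<Rightarrow> bool" where
  "semicomplete X A \<longleftrightarrow> (\<forall>x\<in>X. \<forall>y\<in>X. x \<noteq> y \<longrightarrow> (x, y) \<in> A \<or> (y, x) \<in> A)"

definition locally_semicomplete :: "'a set \<Rightarrow> ('a \<times> 'a) set \<Rightarrow> bool" where
  "locally_semicomplete V A \<longleftrightarrow>
     (\<forall>x\<in>V. semicomplete (outN A x) A \<and> semicomplete (inN A x) A)"

definition strongly_connected :: "'a set \<Rightarrow> ('a \<times> 'a) set \<Rightarrow> bool" where
  "strongly_connected X A \<longleftrightarrow> X \<noteq> {} \<and> (\<forall>u\<in>X. \<forall>v\<in>X. (u, v) \<in> (A \<inter> (X \<times> X))\<^sup>*)"

definition weak_hub :: "'a set \<Rightarrow> ('a \<times> 'a) set \<Rightarrow> 'a set \<Rightarrow> bool" where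
  "weak_hub V A X \<longleftrightarrow> X \<subseteq> V \<and> strongly_connected X A \<and>
     (\<exists>x\<in>V. X \<subseteq> inN A x - outN A x \<or> X \<subseteq> outN A x - inN A x)"

definition maximal_weak_hub :: "'a set \<Rightarrow> ('a \<times> 'a) set \<Rightarrow> 'a set \<Rightarrow> bool" where
  "maximal_weak_hub V A X \<longleftrightarrow> weak_hub V A X \<and> (\<forall>Y. weak_hub V A Y \<and> X \<subseteq> Y \<longrightarrow> Y = X)"

definition mixed :: "'a set \<Rightarrow> ('a \<times> 'a) set \<Rightarrow> 'a set \<Rightarrow> bool" where
  "mixed V A X \<longleftrightarrow> (\<exists>x\<in>V - X. \<exists>u\<in>X. \<exists>v\<in>X. (x, u) \<in> A \<and> (v, x) \<in> A)"

definition universal_vertex :: "'a set \<Rightarrow> ('a \<times> 'a) set \<Rightarrow> 'a \<Rightarrow> bool" where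
  "universal_vertex V A x \<longleftrightarrow> x \<in> V \<and> outN A x = V - {x} \<and> inN A x = V - {x}"

definition oriented :: "('a \<times> 'a) set \<Rightarrow> bool" where
  "oriented A \<longleftrightarrow> (\<forall>x y. (x, y) \<in> A \<longrightarrow> (y, x) \<notin> A)"

text \<open>Round: there is a cyclic order f 0, ..., f (n-1) of the vertices such that for
  every arc f i f j and every f m strictly between f i and f j going forward,
  f i f m and f m f j are arcs.\<close>
definition round :: "'a set \<Rightarrow> ('a \<times> 'a) set \<Rightarrow> bool" where
  "round V A \<longleftrightarrow> oriented A \<and>
     (\<exists>f. bij_betw f {..<card V} V \<and>
        (\<forall>i<card V. \<forall>j<card V. \<forall>m<card V.
           (f i, f j) \<in> A \<and> 0 < (m + card V - i) mod card V \<and>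
           (m + card V - i) mod card V < (j + card V - i) mod card V
           \<longrightarrow> (f i, f m) \<in> A \<and> (f m, f j) \<in> A))"

definition contract_arcs :: "'a set set \<Rightarrow> ('a \<times> 'a) set \<Rightarrow> ('a set \<times> 'a set) set" where
  "contract_arcs P A = {(X, Y). X \<in> P \<and> Y \<in> P \<and> X \<noteq> Y \<and> (\<exists>u\<in>X. \<exists>v\<in>Y. (u, v) \<in> A)}"

end

theory Submission
  imports Defs
begin

text \<open>If some vertex v is incident only with digons, local semicompleteness propagates along
  any path leaving v, so v is joined by digons to every vertex and D is semicomplete.

  Otherwise every singleton is a weak hub, so the maximal weak hubs cover V. Every outside
  neighbour of a non-mixed strongly connected set X either dominates all of X or is dominated by
  all of X; hence two such sets that meet are nested, the maximal weak hubs partition V, and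
  between two of them all arcs go one way. The contraction is therefore a connected locally
  semicomplete oriented graph in which no out- or in-neighbourhood contains a directed triangle,
  because the union of the three hubs of such a triangle would be a larger weak hub.

  Such a graph is round: a round enumeration of a connected induced subgraph extends to any
  adjacent vertex v, by placing v directly before its first out-neighbour (the source of the
  transitive tournament formed by its out-neighbours), or dually after its last in-neighbour.\<close>

lemma rtrancl_leaves_set:
  assumes "(u, w) \<in> r\<^sup>*" "u \<in> X" "w \<notin> X"
  shows "\<exists>a b. (a, b) \<in> r \<and> a \<in> X \<and> b \<notin> X"
  using assms
proof (induction rule: rtrancl_induct)
  case (step y z)
  then show ?case by (cases "y \<in> X") auto
qed blast

lemma orientedD: "oriented E \<Longrightarrow> (a, b) \<in> E \<Longrightarrow> (b, a) \<notin> E"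
  unfolding oriented_def by blast

lemma locally_semicomplete_outD:
  "locally_semicomplete W E \<Longrightarrow> x \<in> W \<Longrightarrow> (x, a) \<in> E \<Longrightarrow> (x, b) \<in> E \<Longrightarrow> a \<noteq> b
    \<Longrightarrow> (a, b) \<in> E \<or> (b, a) \<in> E"
  unfolding locally_semicomplete_def semicomplete_def outN_def by blast

lemma locally_semicomplete_inD:
  "locally_semicomplete W E \<Longrightarrow> x \<in> W \<Longrightarrow> (a, x) \<in> E \<Longrightarrow> (b, x) \<in> E \<Longrightarrow> a \<noteq> b
    \<Longrightarrow> (a, b) \<in> E \<or> (b, a) \<in> E"
  unfolding locally_semicomplete_def semicomplete_def inN_def by blast

lemma locally_semicomplete_converse: "locally_semicomplete W E \<Longrightarrow> locally_semicomplete W (E\<inverse>)"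
  unfolding locally_semicomplete_def semicomplete_def outN_def inN_def by blast

lemma connected_dg_converse: "connected_dg S (E \<inter> S \<times> S) \<Longrightarrow> connected_dg S (E\<inverse> \<inter> S \<times> S)"
proof -
  have "(E\<inverse> \<inter> S \<times> S) \<union> (E\<inverse> \<inter> S \<times> S)\<inverse> = (E \<inter> S \<times> S) \<union> (E \<inter> S \<times> S)\<inverse>" by auto
  then show "connected_dg S (E \<inter> S \<times> S) \<Longrightarrow> connected_dg S (E\<inverse> \<inter> S \<times> S)"
    unfolding connected_dg_def by simp
qed

lemma connected_dg_insert:
  assumes conn: "connected_dg S (E \<inter> S \<times> S)" and a: "a \<in> S" and ab: "(a, b) \<in> E \<or> (b, a) \<in> E"
  shows "connected_dg (insert b S) (E \<inter> insert b S \<times> insert b S)"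
proof -
  let ?R = "(E \<inter> S \<times> S) \<union> (E \<inter> S \<times> S)\<inverse>"
  let ?R' = "(E \<inter> insert b S \<times> insert b S) \<union> (E \<inter> insert b S \<times> insert b S)\<inverse>"
  have "?R\<^sup>* \<subseteq> ?R'\<^sup>*" by (rule rtrancl_mono) auto
  then have inS: "(x, y) \<in> ?R'\<^sup>*" if "x \<in> S" "y \<in> S" for x y
    using conn that unfolding connected_dg_def by blast
  have "(a, b) \<in> ?R'" "(b, a) \<in> ?R'" using a ab by auto
  then have "(x, b) \<in> ?R'\<^sup>* \<and> (b, x) \<in> ?R'\<^sup>*" if "x \<in> insert b S" for x
  proof (cases "x = b")
    case False
    then have "x \<in> S" using that by simp
    then show ?thesis
      using inS[OF _ a] inS[OF a] \<open>(a, b) \<in> ?R'\<close> \<open>(b, a) \<in> ?R'\<close>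
      by (blast intro: rtrancl_into_rtrancl converse_rtrancl_into_rtrancl)
  qed simp
  then show ?thesis unfolding connected_dg_def by (blast intro: rtrancl_trans)
qed

text \<open>For a local tournament this says that every out- and in-neighbourhood induces a transitive
  tournament.\<close>
definition locally_transitive :: "('b \<times> 'b) set \<Rightarrow> bool" where
  "locally_transitive E \<longleftrightarrow> (\<forall>x a b c. (a, b) \<in> E \<and> (b, c) \<in> E \<and> (c, a) \<in> E \<longrightarrow>
     \<not> {a, b, c} \<subseteq> outN E x \<and> \<not> {a, b, c} \<subseteq> inN E x)"

lemma locally_transitive_outD:
  "locally_transitive E \<Longrightarrow> (x, a) \<in> E \<Longrightarrow> (x, b) \<in> E \<Longrightarrow> (x, c) \<in> E
    \<Longrightarrow> (a, b) \<in> E \<Longrightarrow> (b, c) \<in> E \<Longrightarrow> (c, a) \<in> E \<Longrightarrow> False"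
  unfolding locally_transitive_def outN_def by blast

lemma locally_transitive_inD:
  "locally_transitive E \<Longrightarrow> (a, x) \<in> E \<Longrightarrow> (b, x) \<in> E \<Longrightarrow> (c, x) \<in> E
    \<Longrightarrow> (a, b) \<in> E \<Longrightarrow> (b, c) \<in> E \<Longrightarrow> (c, a) \<in> E \<Longrightarrow> False"
  unfolding locally_transitive_def inN_def by blast

lemma locally_transitive_converse: "locally_transitive E \<Longrightarrow> locally_transitive (E\<inverse>)"
  unfolding locally_transitive_def outN_def inN_def by blast

lemma transitive_tournament_has_source:
  assumes "finite M" "M \<noteq> {}"
    and "\<forall>a\<in>M. \<forall>b\<in>M. a \<noteq> b \<longrightarrow> (a, b) \<in> E \<or> (b, a) \<in> E"
    and "\<forall>a\<in>M. \<forall>b\<in>M. \<forall>c\<in>M. (a, b) \<in> E \<longrightarrow> (b, c) \<in> E \<longrightarrow> (a, c) \<in> E"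
  shows "\<exists>s\<in>M. \<forall>w\<in>M. w \<noteq> s \<longrightarrow> (s, w) \<in> E"
  using assms
proof (induction M rule: finite_ne_induct)
  case (insert x F)
  have "\<forall>a\<in>F. \<forall>b\<in>F. a \<noteq> b \<longrightarrow> (a, b) \<in> E \<or> (b, a) \<in> E"
    and "\<forall>a\<in>F. \<forall>b\<in>F. \<forall>c\<in>F. (a, b) \<in> E \<longrightarrow> (b, c) \<in> E \<longrightarrow> (a, c) \<in> E"
    using insert.prems by blast+
  then obtain s where s: "s \<in> F" "\<forall>w\<in>F. w \<noteq> s \<longrightarrow> (s, w) \<in> E"
    using insert.IH by blast
  have "x \<noteq> s" using insert.hyps s(1) by blast
  then have "(x, s) \<in> E \<or> (s, x) \<in> E" using insert.prems(1) s(1) by simp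
  then show ?case
  proof
    assume xs: "(x, s) \<in> E"
    have "(x, w) \<in> E" if "w \<in> F" for w
    proof (cases "w = s")
      case False
      then have "(s, w) \<in> E" using s that by blast
      moreover have "x \<in> insert x F" "s \<in> insert x F" "w \<in> insert x F" using s(1) that by auto
      ultimately show ?thesis using xs insert.prems(2) by blast
    qed (use xs in simp)
    then show ?thesis by blast
  next
    assume "(s, x) \<in> E"
    with s(2) have "\<forall>w\<in>insert x F. w \<noteq> s \<longrightarrow> (s, w) \<in> E" by blast
    with s(1) show ?thesis by blast
  qed
qed blast

subsection \<open>Round orders\<close>

definition cyc_between :: "nat \<Rightarrow> nat \<Rightarrow> nat \<Rightarrow> bool" where
  "cyc_between i m j \<longleftrightarrow> (i < m \<and> m < j) \<or> (j < i \<and> (i < m \<or> m < j))"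

definition round_order :: "nat \<Rightarrow> ('b \<times> 'b) set \<Rightarrow> (nat \<Rightarrow> 'b) \<Rightarrow> bool" where
  "round_order n E f \<longleftrightarrow> (\<forall>i<n. \<forall>j<n. \<forall>m<n. (f i, f j) \<in> E \<and> cyc_between i m j \<longrightarrow>
     (f i, f m) \<in> E \<and> (f m, f j) \<in> E)"

lemma round_orderD:
  "round_order n E f \<Longrightarrow> i < n \<Longrightarrow> j < n \<Longrightarrow> m < n \<Longrightarrow> (f i, f j) \<in> E \<Longrightarrow> cyc_between i m j
    \<Longrightarrow> (f i, f m) \<in> E \<and> (f m, f j) \<in> E"
  unfolding round_order_def by blast

lemma cyc_between_mod_iff:
  assumes "i < n" "m < n" "j < n"
  shows "(0 < (m + n - i) mod n \<and> (m + n - i) mod n < (j + n - i) mod n) \<longleftrightarrow> cyc_between i m j"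
proof -
  have offset: "(x + n - i) mod n = (if i \<le> x then x - i else x + n - i)" if "x < n" for x
  proof (cases "i \<le> x")
    case True
    then have "x + n - i = (x - i) + n" by simp
    then have "(x + n - i) mod n = (x - i) mod n" by simp
    then show ?thesis using True that by simp
  qed (use assms that in simp)
  show ?thesis
    using offset[OF assms(2)] offset[OF assms(3)] assms unfolding cyc_between_def
    by (cases "i \<le> m"; cases "i \<le> j") auto
qed

lemma round_if_round_order:
  assumes "oriented E" "bij_betw f {..<card W} W" "round_order (card W) E f"
  shows "round W E"
proof -
  have "(f i, f m) \<in> E \<and> (f m, f j) \<in> E"
    if "i < card W" "j < card W" "m < card W" "(f i, f j) \<in> E"
      and "0 < (m + card W - i) mod card W"
      and "(m + card W - i) mod card W < (j + card W - i) mod card W"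
    for i j m
    using that round_orderD[OF assms(3)] cyc_between_mod_iff[of i "card W" m j] by blast
  then show ?thesis unfolding round_def using assms(1,2) by blast
qed

lemma bij_betw_reverse:
  fixes n :: nat
  assumes "bij_betw f {..<n} S"
  shows "bij_betw (\<lambda>k. f (n - 1 - k)) {..<n} S"
proof -
  have "bij_betw (\<lambda>k. n - 1 - k) {..<n} {..<n}"
    by (rule bij_betw_byWitness[where f'="\<lambda>k. n - 1 - k"]) auto
  from bij_betw_trans[OF this assms] show ?thesis by (simp add: comp_def)
qed

lemma round_order_reverse:
  assumes "round_order n E f"
  shows "round_order n (E\<inverse>) (\<lambda>k. f (n - 1 - k))"
  unfolding round_order_def
proof (intro allI impI)
  fix i j m
  assume "i < n" "j < n" "m < n" and ij: "(f (n - 1 - i), f (n - 1 - j)) \<in> E\<inverse> \<and> cyc_between i m j"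
  then have "cyc_between (n - 1 - j) (n - 1 - m) (n - 1 - i)" unfolding cyc_between_def by auto
  with \<open>i < n\<close> \<open>j < n\<close> \<open>m < n\<close> ij
  show "(f (n - 1 - i), f (n - 1 - m)) \<in> E\<inverse> \<and> (f (n - 1 - m), f (n - 1 - j)) \<in> E\<inverse>"
    using round_orderD[OF assms, of "n - 1 - j" "n - 1 - i" "n - 1 - m"] by simp
qed

definition rotate_index :: "nat \<Rightarrow> nat \<Rightarrow> nat \<Rightarrow> nat" where
  "rotate_index n p k = (if k + p < n then k + p else k + p - n)"

lemma bij_betw_rotate:
  assumes "bij_betw f {..<n} S" "p < n"
  shows "bij_betw (\<lambda>k. f (rotate_index n p k)) {..<n} S"
proof -
  have "bij_betw (rotate_index n p) {..<n} {..<n}"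
    by (rule bij_betw_byWitness[where f'="\<lambda>k. if p \<le> k then k - p else k + n - p"])
      (use assms(2) in \<open>auto simp: rotate_index_def\<close>)
  from bij_betw_trans[OF this assms(1)] show ?thesis by (simp add: comp_def)
qed

lemma round_order_rotate:
  assumes "round_order n E f" "p < n"
  shows "round_order n E (\<lambda>k. f (rotate_index n p k))"
  unfolding round_order_def
proof (intro allI impI)
  fix i j m assume "i < n" "j < n" "m < n"
    and ij: "(f (rotate_index n p i), f (rotate_index n p j)) \<in> E \<and> cyc_between i m j"
  then have "cyc_between (rotate_index n p i) (rotate_index n p m) (rotate_index n p j)"
    using assms(2) unfolding rotate_index_def cyc_between_def
    by (cases "i + p < n"; cases "m + p < n"; cases "j + p < n") auto
  moreover have "rotate_index n p x < n" if "x < n" for x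
    using that assms(2) unfolding rotate_index_def by auto
  ultimately show "(f (rotate_index n p i), f (rotate_index n p m)) \<in> E \<and>
      (f (rotate_index n p m), f (rotate_index n p j)) \<in> E"
    using round_orderD[OF assms(1)] ij \<open>i < n\<close> \<open>j < n\<close> \<open>m < n\<close> by blast
qed

subsection \<open>Extending a round order by one vertex\<close>

text \<open>The new vertex v is placed at position n, directly before its first out-neighbour f 0.\<close>
locale round_insertion =
  fixes W :: "'b set" and E :: "('b \<times> 'b) set" and S :: "'b set" and v :: 'b
    and f :: "nat \<Rightarrow> 'b" and n :: nat
  assumes bij: "bij_betw f {..<n} S"
    and order: "round_order n E f"
    and fresh: "v \<notin> S"
    and oriented: "oriented E"
    and semicomplete: "locally_semicomplete W E"
    and transitive: "locally_transitive E"
    and subset: "insert v S \<subseteq> W"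
    and connected: "connected_dg S (E \<inter> S \<times> S)"
    and first: "(v, f 0) \<in> E"
    and first_dominates: "\<And>w. w \<in> S \<Longrightarrow> (v, w) \<in> E \<Longrightarrow> w \<noteq> f 0 \<Longrightarrow> (f 0, w) \<in> E"
begin

lemma f_in: "k < n \<Longrightarrow> f k \<in> S"
  using bij by (auto simp: bij_betw_def)

lemma f_inW: "k < n \<Longrightarrow> f k \<in> W"
  using f_in subset by auto

lemma v_inW: "v \<in> W"
  using subset by auto

lemma f_eq_iff: "k < n \<Longrightarrow> l < n \<Longrightarrow> f k = f l \<longleftrightarrow> k = l"
  using bij by (auto simp: bij_betw_def inj_on_def)

lemma f_neq_v: "k < n \<Longrightarrow> f k \<noteq> v"
  using f_in fresh by auto

lemma n_pos: "0 < n"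
  using connected bij unfolding connected_dg_def bij_betw_def by auto

lemma first_dominates_index: "k < n \<Longrightarrow> k \<noteq> 0 \<Longrightarrow> (v, f k) \<in> E \<Longrightarrow> (f 0, f k) \<in> E"
  using first_dominates f_in f_eq_iff n_pos by blast

lemma in_neighbour_index_pos: "(f i, v) \<in> E \<Longrightarrow> 0 < i"
  using first orientedD[OF oriented] by (cases i) auto

lemma out_neighbour_before_in_neighbour:
  assumes k: "k < n" "(v, f k) \<in> E" and i: "i < n" "(f i, v) \<in> E"
  shows "k < i"
proof (rule ccontr)
  assume "\<not> k < i"
  moreover have "i \<noteq> k" using k i orientedD[OF oriented] by blast
  moreover have "i \<noteq> 0" using in_neighbour_index_pos i(2) by blast
  ultimately have "0 < i" "i < k" by auto
  then have "(f 0, f k) \<in> E" using first_dominates_index k by simp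
  moreover from \<open>0 < i\<close> \<open>i < k\<close> have "cyc_between 0 i k" unfolding cyc_between_def by simp
  ultimately have "(f 0, f i) \<in> E" "(f i, f k) \<in> E"
    using round_orderD[OF order n_pos k(1) i(1)] by auto
  then show False
    using locally_transitive_inD[OF transitive k(2) \<open>(f 0, f k) \<in> E\<close> _ first _ i(2)] by blast
qed

lemma crossing_arc:
  assumes "k < n - 1"
  obtains \<alpha> \<beta> where "\<alpha> \<le> k" "k < \<beta>" "\<beta> < n" "(f \<alpha>, f \<beta>) \<in> E \<or> (f \<beta>, f \<alpha>) \<in> E"
proof -
  let ?R = "(E \<inter> S \<times> S) \<union> (E \<inter> S \<times> S)\<inverse>"
  have "(f 0, f (n - 1)) \<in> ?R\<^sup>*"
    using connected f_in n_pos unfolding connected_dg_def by simp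
  moreover have "f (n - 1) \<notin> f ` {..k}"
  proof
    assume "f (n - 1) \<in> f ` {..k}"
    then obtain l where "l \<le> k" "f (n - 1) = f l" by auto
    moreover have "l < n" "n - 1 < n" using \<open>l \<le> k\<close> assms by auto
    ultimately show False using f_eq_iff assms by fastforce
  qed
  ultimately obtain a b where ab: "(a, b) \<in> ?R" "a \<in> f ` {..k}" "b \<notin> f ` {..k}"
    using rtrancl_leaves_set[of "f 0" "f (n - 1)" ?R "f ` {..k}"] by auto
  obtain \<alpha> where "\<alpha> \<le> k" "a = f \<alpha>" using ab(2) by auto
  moreover obtain \<beta> where "\<beta> < n" "b = f \<beta>"
    using ab(1) bij unfolding bij_betw_def by auto
  moreover have "k < \<beta>"
  proof (rule ccontr)
    assume "\<not> k < \<beta>"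
    then have "b \<in> f ` {..k}" using \<open>b = f \<beta>\<close> by simp
    then show False using ab(3) by contradiction
  qed
  ultimately show ?thesis using that ab(1) by blast
qed

lemma adjacent_beyond_in_neighbour:
  assumes "k < n - 1" "(f k, v) \<in> E"
  obtains l where "k < l" "l < n" "(f l, v) \<in> E \<or> (v, f l) \<in> E"
proof -
  obtain \<alpha> \<beta> where \<alpha>\<beta>: "\<alpha> \<le> k" "k < \<beta>" "\<beta> < n" "(f \<alpha>, f \<beta>) \<in> E \<or> (f \<beta>, f \<alpha>) \<in> E"
    using crossing_arc[OF assms(1)] .
  have k: "k < n" "\<alpha> < n" using \<alpha>\<beta> by auto
  from \<alpha>\<beta>(4) have "(f \<beta>, v) \<in> E \<or> (v, f \<beta>) \<in> E"
  proof
    assume arc: "(f \<alpha>, f \<beta>) \<in> E"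
    have "(f k, f \<beta>) \<in> E"
    proof (cases "\<alpha> = k")
      case False
      then have "cyc_between \<alpha> k \<beta>" using \<alpha>\<beta> unfolding cyc_between_def by auto
      then show ?thesis using round_orderD[OF order k(2) \<alpha>\<beta>(3) k(1) arc] by blast
    qed (use arc in simp)
    then show ?thesis
      using locally_semicomplete_outD[OF semicomplete f_inW[OF k(1)] assms(2)] f_neq_v[OF \<alpha>\<beta>(3)]
      by blast
  next
    assume arc: "(f \<beta>, f \<alpha>) \<in> E"
    have "(f \<beta>, f 0) \<in> E"
    proof (cases "\<alpha> = 0")
      case False
      then have "cyc_between \<beta> 0 \<alpha>" using \<alpha>\<beta> unfolding cyc_between_def by auto
      then show ?thesis using round_orderD[OF order \<alpha>\<beta>(3) k(2) n_pos arc] by blast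
    qed (use arc in simp)
    then show ?thesis
      using locally_semicomplete_inD[OF semicomplete f_inW[OF n_pos] first] f_neq_v[OF \<alpha>\<beta>(3)]
      by blast
  qed
  then show ?thesis using that \<alpha>\<beta> by blast
qed

lemma last_in_neighbour:
  assumes i: "i < n" "(f i, v) \<in> E"
  shows "(f (n - 1), v) \<in> E"
proof -
  define K where "K = {l. l < n \<and> ((f l, v) \<in> E \<or> (v, f l) \<in> E)}"
  define k where "k = Max K"
  have "finite K" "i \<in> K" unfolding K_def using i by auto
  then have k: "k \<in> K" "\<And>l. l \<in> K \<Longrightarrow> l \<le> k" "i \<le> k"
    unfolding k_def using Max_in Max_ge by blast+
  have "(f k, v) \<in> E"
    using k out_neighbour_before_in_neighbour[OF _ _ i] unfolding K_def by fastforce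
  moreover have "k = n - 1"
  proof (rule ccontr)
    assume "k \<noteq> n - 1"
    then have "k < n - 1" using k(1) unfolding K_def by auto
    with \<open>(f k, v) \<in> E\<close> obtain l where "k < l" "l \<in> K"
      using adjacent_beyond_in_neighbour unfolding K_def by blast
    then show False using k(2) by fastforce
  qed
  ultimately show ?thesis by simp
qed

lemma insert_out_arc:
  assumes j: "j < n" "(v, f j) \<in> E" and "m < j"
  shows "(v, f m) \<in> E \<and> (f m, f j) \<in> E"
proof -
  have j0: "(f 0, f j) \<in> E" using first_dominates_index j \<open>m < j\<close> by simp
  show ?thesis
  proof (cases "m = 0")
    case False
    have m: "m < n" using \<open>m < j\<close> j by simp
    from False \<open>m < j\<close> have "cyc_between 0 m j" unfolding cyc_between_def by simp
    then have "(f 0, f m) \<in> E" "(f m, f j) \<in> E" using round_orderD[OF order n_pos j(1) m j0] by auto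
    moreover have "(f m, v) \<notin> E"
      using locally_transitive_inD[OF transitive j(2) j0 \<open>(f m, f j) \<in> E\<close> first \<open>(f 0, f m) \<in> E\<close>]
      by blast
    ultimately show ?thesis
      using locally_semicomplete_inD[OF semicomplete f_inW[OF j(1)] j(2)] f_neq_v[OF m] by blast
  qed (use first j0 in simp)
qed

lemma insert_in_arc:
  assumes i: "i < n" "(f i, v) \<in> E" and m: "i < m" "m < n"
  shows "(f i, f m) \<in> E \<and> (f m, v) \<in> E"
proof -
  have last: "n - 1 < n" "(f (n - 1), v) \<in> E" using last_in_neighbour[OF i] n_pos by auto
  have "i \<noteq> 0" using in_neighbour_index_pos i(2) by blast
  have to_last: "(f i, f (n - 1)) \<in> E"
  proof -
    have "(f (n - 1), f i) \<notin> E"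
    proof
      assume arc: "(f (n - 1), f i) \<in> E"
      have "cyc_between (n - 1) 0 i" using m \<open>i \<noteq> 0\<close> unfolding cyc_between_def by auto
      then have "(f (n - 1), f 0) \<in> E" "(f 0, f i) \<in> E"
        using round_orderD[OF order last(1) i(1) n_pos arc] by auto
      then show False using locally_transitive_outD[OF transitive last(2) _ arc first _ i(2)]
        by blast
    qed
    moreover have "f i \<noteq> f (n - 1)" using f_eq_iff[OF i(1) last(1)] m by auto
    ultimately show ?thesis using locally_semicomplete_inD[OF semicomplete v_inW i(2) last(2)]
      by blast
  qed
  show ?thesis
  proof (cases "m = n - 1")
    case False
    then have "cyc_between i m (n - 1)" using m unfolding cyc_between_def by auto
    then have "(f i, f m) \<in> E" "(f m, f (n - 1)) \<in> E"
      using round_orderD[OF order i(1) last(1) m(2) to_last] by auto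
    moreover have "(v, f m) \<notin> E"
      using locally_transitive_outD[OF transitive i(2) \<open>(f i, f m) \<in> E\<close> to_last _
          \<open>(f m, f (n - 1)) \<in> E\<close> last(2)]
      by blast
    ultimately show ?thesis
      using locally_semicomplete_outD[OF semicomplete f_inW[OF i(1)] i(2)] f_neq_v[OF m(2)] by blast
  qed (use to_last last in simp)
qed

lemma insert_wrap_arc:
  assumes ij: "j < i" "i < n" "(f i, f j) \<in> E"
  shows "(f i, v) \<in> E \<and> (v, f j) \<in> E"
proof -
  have j: "j < n" using ij by simp
  have i0: "(f i, f 0) \<in> E \<and> (f 0, f j) \<in> E \<or> j = 0"
    using ij round_orderD[OF order ij(2) j n_pos ij(3)] unfolding cyc_between_def by auto
  then have "(f i, f 0) \<in> E" using ij(3) by auto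
  have iv: "(f i, v) \<in> E"
  proof -
    have "i \<noteq> 0" using ij(1) by simp
    then have "(v, f i) \<notin> E"
      using first_dominates_index[OF ij(2)] \<open>(f i, f 0) \<in> E\<close> orientedD[OF oriented] by blast
    then show ?thesis
      using locally_semicomplete_inD[OF semicomplete f_inW[OF n_pos] \<open>(f i, f 0) \<in> E\<close> first]
        f_neq_v[OF ij(2)]
      by blast
  qed
  have "(v, f j) \<in> E"
  proof (cases "j = 0")
    case False
    then have "(f 0, f j) \<in> E" using i0 by simp
    have "(f j, v) \<notin> E"
      using locally_transitive_outD[OF transitive iv \<open>(f i, f 0) \<in> E\<close> ij(3) first \<open>(f 0, f j) \<in> E\<close>]
      by blast
    then show ?thesis
      using locally_semicomplete_outD[OF semicomplete f_inW[OF ij(2)] iv ij(3)] f_neq_v[OF j]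
      by blast
  qed (use first in simp)
  with iv show ?thesis by blast
qed

lemma round_order_insert: "round_order (Suc n) E (\<lambda>k. if k < n then f k else v)"
  unfolding round_order_def
proof (intro allI impI)
  fix i j m
  define g where "g = (\<lambda>k. if k < n then f k else v)"
  assume "i < Suc n" "j < Suc n" "m < Suc n" "(g i, g j) \<in> E \<and> cyc_between i m j"
  then have ijm: "i \<le> n" "j \<le> n" "m \<le> n" and arc: "(g i, g j) \<in> E" and btw: "cyc_between i m j"
    unfolding g_def by auto
  have "g n = v" unfolding g_def by simp
  then have "i \<noteq> n \<or> j \<noteq> n" using arc orientedD[OF oriented] by auto
  then consider "i = n" "j < n" | "j = n" "i < n" | "m = n" "i < n" "j < n" | "i < n" "j < n" "m < n"
    using ijm by linarith
  then show "(g i, g m) \<in> E \<and> (g m, g j) \<in> E"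
  proof cases
    case 1
    then have "m < j" using btw ijm unfolding cyc_between_def by auto
    then show ?thesis using insert_out_arc[of j m] arc 1 unfolding g_def by simp
  next
    case 2
    then have "i < m" "m < n" using btw ijm unfolding cyc_between_def by auto
    then show ?thesis using insert_in_arc[of i m] arc 2 unfolding g_def by simp
  next
    case 3
    then have "j < i" using btw unfolding cyc_between_def by auto
    then show ?thesis using insert_wrap_arc[of j i] arc 3 unfolding g_def by simp
  next
    case 4
    then show ?thesis using round_orderD[OF order 4(1,2,3)] arc btw unfolding g_def by simp
  qed
qed

lemma bij_betw_insert: "bij_betw (\<lambda>k. if k < n then f k else v) {..<Suc n} (insert v S)"
proof -
  have "bij_betw (\<lambda>k. if k < n then f k else v) ({..<n} \<union> {n}) (S \<union> {v})"
    by (rule bij_betw_combine) (use bij fresh in \<open>auto simp: bij_betw_def inj_on_def\<close>)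
  then show ?thesis by (simp add: lessThan_Suc)
qed

end

lemma round_order_insert_out_neighbour:
  assumes bij: "bij_betw f {..<n} S" and order: "round_order n E f" and fresh: "v \<notin> S"
    and oriented: "oriented E" and semicomplete: "locally_semicomplete W E"
    and transitive: "locally_transitive E" and subset: "insert v S \<subseteq> W"
    and connected: "connected_dg S (E \<inter> S \<times> S)"
    and u: "u \<in> S" "(v, u) \<in> E"
  shows "\<exists>g. bij_betw g {..<Suc n} (insert v S) \<and> round_order (Suc n) E g"
proof -
  define M where "M = {w \<in> S. (v, w) \<in> E}"
  have "\<exists>s\<in>M. \<forall>w\<in>M. w \<noteq> s \<longrightarrow> (s, w) \<in> E"
  proof (rule transitive_tournament_has_source)
    have "finite S" using bij bij_betw_finite by blast
    then show "finite M" "M \<noteq> {}" unfolding M_def using u by auto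
    show tournament: "\<forall>a\<in>M. \<forall>b\<in>M. a \<noteq> b \<longrightarrow> (a, b) \<in> E \<or> (b, a) \<in> E"
      unfolding M_def using locally_semicomplete_outD[OF semicomplete] subset by blast
    show "\<forall>a\<in>M. \<forall>b\<in>M. \<forall>c\<in>M. (a, b) \<in> E \<longrightarrow> (b, c) \<in> E \<longrightarrow> (a, c) \<in> E"
    proof (intro ballI impI)
      fix a b c assume abc: "a \<in> M" "b \<in> M" "c \<in> M" "(a, b) \<in> E" "(b, c) \<in> E"
      then have "(c, a) \<notin> E" using locally_transitive_outD[OF transitive] unfolding M_def by blast
      moreover have "a \<noteq> c" using abc(4,5) orientedD[OF oriented] by blast
      ultimately show "(a, c) \<in> E" using tournament abc(1,3) by blast
    qed
  qed
  then obtain s where s: "s \<in> S" "(v, s) \<in> E"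
    "\<And>w. w \<in> S \<Longrightarrow> (v, w) \<in> E \<Longrightarrow> w \<noteq> s \<Longrightarrow> (s, w) \<in> E"
    unfolding M_def by blast
  obtain p where p: "p < n" "f p = s" using s(1) bij unfolding bij_betw_def by auto
  define f' where "f' = (\<lambda>k. f (rotate_index n p k))"
  have "f' 0 = s" unfolding f'_def rotate_index_def using p by simp
  interpret round_insertion W E S v f' n
    using bij_betw_rotate[OF bij p(1)] round_order_rotate[OF order p(1)] fresh oriented
      semicomplete transitive subset connected s \<open>f' 0 = s\<close>
    unfolding f'_def by unfold_locales auto
  show ?thesis using bij_betw_insert round_order_insert by blast
qed

lemma round_order_insert_neighbour:
  assumes bij: "bij_betw f {..<n} S" and order: "round_order n E f" and fresh: "v \<notin> S"
    and oriented: "oriented E" and semicomplete: "locally_semicomplete W E"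
    and transitive: "locally_transitive E" and subset: "insert v S \<subseteq> W"
    and connected: "connected_dg S (E \<inter> S \<times> S)"
    and u: "u \<in> S" "(v, u) \<in> E \<or> (u, v) \<in> E"
  shows "\<exists>g. bij_betw g {..<Suc n} (insert v S) \<and> round_order (Suc n) E g"
proof (cases "(v, u) \<in> E")
  case True
  show ?thesis by (rule round_order_insert_out_neighbour[OF assms(1-9) True])
next
  case False
  then have "(v, u) \<in> E\<inverse>" using u(2) by simp
  moreover have "oriented (E\<inverse>)" using oriented unfolding oriented_def by blast
  ultimately obtain g where g: "bij_betw g {..<Suc n} (insert v S)" "round_order (Suc n) (E\<inverse>) g"
    using round_order_insert_out_neighbour[OF bij_betw_reverse[OF bij] round_order_reverse[OF order]
        fresh _ locally_semicomplete_converse[OF semicomplete]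
        locally_transitive_converse[OF transitive] subset connected_dg_converse[OF connected] u(1)]
    by blast
  have "round_order (Suc n) E (\<lambda>k. g (Suc n - 1 - k))" using round_order_reverse[OF g(2)] by simp
  then show ?thesis using bij_betw_reverse[OF g(1)] by blast
qed

lemma round_order_extend:
  assumes "E \<subseteq> W \<times> W" "oriented E" "locally_semicomplete W E" "locally_transitive E"
    and "connected_dg W E"
    and S: "S \<subseteq> W" "S \<noteq> W" "connected_dg S (E \<inter> S \<times> S)"
    and f: "bij_betw f {..<n} S" "round_order n E f"
  obtains b g where "b \<in> W - S" "connected_dg (insert b S) (E \<inter> insert b S \<times> insert b S)"
    "bij_betw g {..<Suc n} (insert b S)" "round_order (Suc n) E g"
proof -
  obtain r w where "r \<in> S" "w \<in> W" "w \<notin> S" using S unfolding connected_dg_def by blast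
  then have "(r, w) \<in> (E \<union> E\<inverse>)\<^sup>*" using assms(5) S(1) unfolding connected_dg_def by blast
  then obtain a b where ab: "(a, b) \<in> E \<union> E\<inverse>" "a \<in> S" "b \<notin> S"
    using rtrancl_leaves_set[OF _ \<open>r \<in> S\<close> \<open>w \<notin> S\<close>] by blast
  then have "insert b S \<subseteq> W" using assms(1) S(1) by auto
  have adj: "(b, a) \<in> E \<or> (a, b) \<in> E" using ab(1) by auto
  then obtain g where "bij_betw g {..<Suc n} (insert b S)" "round_order (Suc n) E g"
    using round_order_insert_neighbour[OF f ab(3) assms(2-4) \<open>insert b S \<subseteq> W\<close> S(3) ab(2)] by blast
  moreover have "connected_dg (insert b S) (E \<inter> insert b S \<times> insert b S)"
    using connected_dg_insert[OF S(3) ab(2)] adj by blast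
  moreover have "b \<in> W - S" using \<open>insert b S \<subseteq> W\<close> ab(3) by blast
  ultimately show ?thesis using that by blast
qed

lemma round_order_subset_exists:
  assumes fin: "finite W" and arcs: "E \<subseteq> W \<times> W" and oriented: "oriented E"
    and semicomplete: "locally_semicomplete W E" and transitive: "locally_transitive E"
    and connected: "connected_dg W E"
    and k: "1 \<le> k" "k \<le> card W"
  shows "\<exists>S f. S \<subseteq> W \<and> card S = k \<and> connected_dg S (E \<inter> S \<times> S) \<and>
      bij_betw f {..<k} S \<and> round_order k E f"
  using k
proof (induction k rule: nat_induct_at_least)
  case base
  obtain r where "r \<in> W" using connected unfolding connected_dg_def by blast
  moreover have "connected_dg {r} (E \<inter> {r} \<times> {r})" unfolding connected_dg_def by simp
  moreover have "bij_betw (\<lambda>_. r) {..<1::nat} {r}" unfolding bij_betw_def inj_on_def by auto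
  moreover have "round_order 1 E (\<lambda>_. r)" unfolding round_order_def cyc_between_def by simp
  ultimately show ?case by (intro exI[of _ "{r}"] exI[of _ "\<lambda>_. r"]) auto
next
  case (Suc k)
  then obtain S f where S: "S \<subseteq> W" "card S = k" "connected_dg S (E \<inter> S \<times> S)"
    "bij_betw f {..<k} S" "round_order k E f" by auto
  then have "S \<noteq> W" using Suc.prems by auto
  then obtain b g where "b \<in> W - S" "connected_dg (insert b S) (E \<inter> insert b S \<times> insert b S)"
    "bij_betw g {..<Suc k} (insert b S)" "round_order (Suc k) E g"
    using round_order_extend[OF arcs oriented semicomplete transitive connected S(1) _ S(3-5)]
    by blast
  moreover have "card (insert b S) = Suc k"
    using S(1,2) \<open>b \<in> W - S\<close> fin by (simp add: finite_subset)
  ultimately show ?case using S(1) by (intro exI[of _ "insert b S"] exI[of _ g]) auto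
qed

theorem round_if_locally_transitive:
  assumes fin: "finite W" and "E \<subseteq> W \<times> W" and oriented: "oriented E"
    and "locally_semicomplete W E" and "locally_transitive E" and connected: "connected_dg W E"
  shows "round W E"
proof -
  have "1 \<le> card W" using fin connected unfolding connected_dg_def
    by (simp add: Suc_le_eq card_gt_0_iff)
  then obtain S f where S: "S \<subseteq> W" "card S = card W"
    and f: "bij_betw f {..<card W} S" "round_order (card W) E f"
    using round_order_subset_exists[OF assms] by blast
  have "S = W" using card_subset_eq[OF fin S] .
  with f show ?thesis using round_if_round_order[OF oriented] by blast
qed

subsection \<open>Non-mixed strongly connected sets\<close>

lemma digraph_arcD: "digraph V A \<Longrightarrow> (a, b) \<in> A \<Longrightarrow> a \<in> V \<and> b \<in> V"
  unfolding digraph_def by blast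

lemma digraph_irrefl: "digraph V A \<Longrightarrow> (a, a) \<notin> A"
  unfolding digraph_def by blast

lemma nonmixed_in_arc_complete:
  assumes digraph: "digraph V A" and semicomplete: "locally_semicomplete V A"
    and X: "strongly_connected X A" "\<not> mixed V A X"
    and y: "y \<notin> X" "(y, u) \<in> A" "u \<in> X" and w: "w \<in> X"
  shows "(y, w) \<in> A \<and> (w, y) \<notin> A"
proof -
  have no_back: "(z, y) \<notin> A" if "z \<in> X" for z
    using X(2) y digraph_arcD[OF digraph y(2)] that unfolding mixed_def by blast
  have "(w, u) \<in> (A \<inter> X \<times> X)\<^sup>*" using X(1) w y(3) unfolding strongly_connected_def by blast
  then have "(y, w) \<in> A"
  proof (induction rule: converse_rtrancl_induct)
    case (step a b)
    then have "(a, b) \<in> A" "a \<in> X" "b \<in> V" using digraph_arcD[OF digraph] by auto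
    then have "(y, a) \<in> A \<or> (a, y) \<in> A"
      using locally_semicomplete_inD[OF semicomplete \<open>b \<in> V\<close> step.IH] y(1) by blast
    then show ?case using no_back[OF \<open>a \<in> X\<close>] by blast
  qed (use y(2) in simp)
  then show ?thesis using no_back[OF w] by blast
qed

lemma nonmixed_out_arc_complete:
  assumes digraph: "digraph V A" and semicomplete: "locally_semicomplete V A"
    and X: "strongly_connected X A" "\<not> mixed V A X"
    and y: "y \<notin> X" "(u, y) \<in> A" "u \<in> X" and w: "w \<in> X"
  shows "(w, y) \<in> A \<and> (y, w) \<notin> A"
proof -
  have no_back: "(y, z) \<notin> A" if "z \<in> X" for z
    using X(2) y digraph_arcD[OF digraph y(2)] that unfolding mixed_def by blast
  have "(u, w) \<in> (A \<inter> X \<times> X)\<^sup>*" using X(1) w y(3) unfolding strongly_connected_def by blast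
  then have "(w, y) \<in> A"
  proof (induction rule: rtrancl_induct)
    case (step a b)
    then have "(a, b) \<in> A" "b \<in> X" "a \<in> V" using digraph_arcD[OF digraph] by auto
    then have "(y, b) \<in> A \<or> (b, y) \<in> A"
      using locally_semicomplete_outD[OF semicomplete \<open>a \<in> V\<close> step.IH] y(1) by blast
    then show ?case using no_back[OF \<open>b \<in> X\<close>] by blast
  qed (use y(2) in simp)
  then show ?thesis using no_back[OF w] by blast
qed

lemma nonmixed_strongly_connected_nested:
  assumes digraph: "digraph V A" and semicomplete: "locally_semicomplete V A"
    and X: "strongly_connected X A" "\<not> mixed V A X"
    and Y: "strongly_connected Y A" "\<not> mixed V A Y"
    and z: "z \<in> X" "z \<in> Y"
  shows "X \<subseteq> Y \<or> Y \<subseteq> X"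
proof (rule ccontr)
  assume "\<not> (X \<subseteq> Y \<or> Y \<subseteq> X)"
  then obtain a0 c0 where a0: "a0 \<in> Y" "a0 \<notin> X" and c0: "c0 \<in> X" "c0 \<notin> Y" by blast
  have "(a0, z) \<in> (A \<inter> Y \<times> Y)\<^sup>*" using Y(1) a0 z unfolding strongly_connected_def by blast
  then obtain a b where ab: "(a, b) \<in> A" "a \<in> Y" "a \<notin> X" "b \<in> X"
    using rtrancl_leaves_set[of a0 z _ "- X"] a0 z by blast
  have "(c0, z) \<in> (A \<inter> X \<times> X)\<^sup>*" using X(1) c0 z unfolding strongly_connected_def by blast
  then obtain c d where cd: "(c, d) \<in> A" "c \<in> X" "c \<notin> Y" "d \<in> Y"
    using rtrancl_leaves_set[of c0 z _ "- Y"] c0 z by blast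
  have "(c, a) \<in> A" using nonmixed_in_arc_complete[OF digraph semicomplete Y cd(3,1,4) ab(2)]
    by blast
  moreover have "(c, a) \<notin> A"
    using nonmixed_in_arc_complete[OF digraph semicomplete X ab(3,1,4) cd(2)] by blast
  ultimately show False by blast
qed

lemma nonmixed_arc_complete:
  assumes digraph: "digraph V A" and semicomplete: "locally_semicomplete V A"
    and X: "strongly_connected X A" "\<not> mixed V A X"
    and Y: "strongly_connected Y A" "\<not> mixed V A Y"
    and disjoint: "X \<inter> Y = {}" and arc: "(u, w) \<in> A" "u \<in> X" "w \<in> Y"
    and u': "u' \<in> X" and w': "w' \<in> Y"
  shows "(u', w') \<in> A \<and> (w', u') \<notin> A"
proof -
  have "u \<notin> Y" "w' \<notin> X" using disjoint arc w' by blast+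
  then have "(u, w') \<in> A" using nonmixed_in_arc_complete[OF digraph semicomplete Y _ arc(1,3) w']
    by blast
  then show ?thesis
    using nonmixed_out_arc_complete[OF digraph semicomplete X \<open>w' \<notin> X\<close> _ arc(2) u'] by blast
qed

subsection \<open>The partition into maximal weak hubs\<close>

lemma strongly_connected_cycle3:
  assumes Y: "strongly_connected Y1 A" "strongly_connected Y2 A" "strongly_connected Y3 A"
    and arcs: "(a1, b2) \<in> A" "(a2, b3) \<in> A" "(a3, b1) \<in> A"
    and mem: "a1 \<in> Y1" "b1 \<in> Y1" "a2 \<in> Y2" "b2 \<in> Y2" "a3 \<in> Y3" "b3 \<in> Y3"
  shows "strongly_connected (Y1 \<union> Y2 \<union> Y3) A"
proof -
  define Z where "Z = Y1 \<union> Y2 \<union> Y3"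
  let ?R = "(A \<inter> Z \<times> Z)\<^sup>*"
  have inside: "(a, b) \<in> ?R" if "strongly_connected Y A" "Y \<subseteq> Z" "a \<in> Y" "b \<in> Y" for Y a b
  proof -
    have "(a, b) \<in> (A \<inter> Y \<times> Y)\<^sup>*" using that unfolding strongly_connected_def by blast
    moreover have "(A \<inter> Y \<times> Y)\<^sup>* \<subseteq> ?R" using that(2) by (intro rtrancl_mono) blast
    ultimately show ?thesis by blast
  qed
  have Y_in: "Y1 \<subseteq> Z" "Y2 \<subseteq> Z" "Y3 \<subseteq> Z" unfolding Z_def by auto
  have step: "(a1, b2) \<in> ?R" "(a2, b3) \<in> ?R" "(a3, b1) \<in> ?R"
    using arcs mem unfolding Z_def by auto
  have "(b1, b2) \<in> ?R" "(b2, b3) \<in> ?R" "(b3, b1) \<in> ?R"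
    using inside[OF Y(1) Y_in(1) mem(2,1)] inside[OF Y(2) Y_in(2) mem(4,3)]
      inside[OF Y(3) Y_in(3) mem(6,5)] step
    by (meson rtrancl_trans)+
  then have cycle: "(b1, b2) \<in> ?R" "(b2, b1) \<in> ?R" "(b1, b3) \<in> ?R" "(b3, b1) \<in> ?R"
    by (meson rtrancl_trans)+
  have "(u, b1) \<in> ?R \<and> (b1, u) \<in> ?R" if "u \<in> Z" for u
    using that inside[OF Y(1) Y_in(1) _ mem(2)] inside[OF Y(1) Y_in(1) mem(2)]
      inside[OF Y(2) Y_in(2) _ mem(4)] inside[OF Y(2) Y_in(2) mem(4)]
      inside[OF Y(3) Y_in(3) _ mem(6)] inside[OF Y(3) Y_in(3) mem(6)] cycle
    unfolding Z_def by (meson UnE rtrancl_trans)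
  then show ?thesis
    unfolding strongly_connected_def Z_def[symmetric] using mem(2) Y_in(1)
    by (blast intro: rtrancl_trans)
qed

lemma contract_arcs_path:
  assumes arcs: "A \<subseteq> V \<times> V" and cover: "\<Union>P = V"
    and disjoint: "\<forall>X\<in>P. \<forall>Y\<in>P. X \<noteq> Y \<longrightarrow> X \<inter> Y = {}"
    and path: "(x, y) \<in> (A \<union> A\<inverse>)\<^sup>*" and X: "X \<in> P" "x \<in> X"
  shows "\<forall>Y\<in>P. y \<in> Y \<longrightarrow> (X, Y) \<in> (contract_arcs P A \<union> (contract_arcs P A)\<inverse>)\<^sup>*"
  using path
proof (induction rule: rtrancl_induct)
  case base
  show ?case
  proof (intro ballI impI)
    fix Y assume "Y \<in> P" "x \<in> Y"
    then have "Y = X" using disjoint X by blast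
    then show "(X, Y) \<in> (contract_arcs P A \<union> (contract_arcs P A)\<inverse>)\<^sup>*" by simp
  qed
next
  case (step z z')
  let ?R = "contract_arcs P A \<union> (contract_arcs P A)\<inverse>"
  obtain Z where Z: "Z \<in> P" "z \<in> Z" using step.hyps(2) arcs cover by blast
  then have "(X, Z) \<in> ?R\<^sup>*" using step.IH by blast
  show ?case
  proof (intro ballI impI)
    fix Z' assume "Z' \<in> P" "z' \<in> Z'"
    show "(X, Z') \<in> ?R\<^sup>*"
    proof (cases "Z = Z'")
      case False
      then have "(Z, Z') \<in> ?R"
        using Z \<open>Z' \<in> P\<close> \<open>z' \<in> Z'\<close> step.hyps(2) unfolding contract_arcs_def by blast
      with \<open>(X, Z) \<in> ?R\<^sup>*\<close> show ?thesis by (rule rtrancl_into_rtrancl)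
    qed (use \<open>(X, Z) \<in> ?R\<^sup>*\<close> in simp)
  qed
qed

lemma connected_contract_arcs:
  assumes connected: "connected_dg V A" and arcs: "A \<subseteq> V \<times> V" and cover: "\<Union>P = V"
    and disjoint: "\<forall>X\<in>P. \<forall>Y\<in>P. X \<noteq> Y \<longrightarrow> X \<inter> Y = {}" and "{} \<notin> P"
  shows "connected_dg P (contract_arcs P A)"
proof -
  have "(X, Y) \<in> (contract_arcs P A \<union> (contract_arcs P A)\<inverse>)\<^sup>*" if "X \<in> P" "Y \<in> P" for X Y
  proof -
    have "X \<noteq> {}" "Y \<noteq> {}" using that \<open>{} \<notin> P\<close> by auto
    then obtain x y where "x \<in> X" "y \<in> Y" by blast
    then have "(x, y) \<in> (A \<union> A\<inverse>)\<^sup>*" using connected cover that unfolding connected_dg_def by blast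
    from contract_arcs_path[OF arcs cover disjoint this that(1) \<open>x \<in> X\<close>]
    show ?thesis using that(2) \<open>y \<in> Y\<close> by blast
  qed
  moreover have "P \<noteq> {}" using connected cover unfolding connected_dg_def by blast
  ultimately show ?thesis unfolding connected_dg_def by blast
qed

locale nonmixed_hubs =
  fixes V :: "'a set" and A :: "('a \<times> 'a) set"
  assumes digraph: "digraph V A" and connected: "connected_dg V A"
    and semicomplete: "locally_semicomplete V A"
    and nonmixed: "\<And>X. maximal_weak_hub V A X \<Longrightarrow> \<not> mixed V A X"
    and one_way: "\<And>v. v \<in> V \<Longrightarrow> \<exists>x. (x, v) \<in> A \<longleftrightarrow> (v, x) \<notin> A"
begin

definition hubs :: "'a set set" where
  "hubs = {X. maximal_weak_hub V A X}"

abbreviation hub_arcs :: "('a set \<times> 'a set) set" where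
  "hub_arcs \<equiv> contract_arcs hubs A"

lemma hub_weak_hub: "X \<in> hubs \<Longrightarrow> weak_hub V A X"
  unfolding hubs_def maximal_weak_hub_def by blast

lemma hub_maximal: "X \<in> hubs \<Longrightarrow> weak_hub V A Y \<Longrightarrow> X \<subseteq> Y \<Longrightarrow> Y = X"
  unfolding hubs_def maximal_weak_hub_def by blast

lemma hub_strongly_connected: "X \<in> hubs \<Longrightarrow> strongly_connected X A"
  using hub_weak_hub unfolding weak_hub_def by blast

lemma hub_subset: "X \<in> hubs \<Longrightarrow> X \<subseteq> V"
  using hub_weak_hub unfolding weak_hub_def by blast

lemma hub_nonempty: "X \<in> hubs \<Longrightarrow> X \<noteq> {}"
  using hub_strongly_connected unfolding strongly_connected_def by blast

lemma hub_nonmixed: "X \<in> hubs \<Longrightarrow> \<not> mixed V A X"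
  using nonmixed unfolding hubs_def by blast

lemma singleton_weak_hub: "v \<in> V \<Longrightarrow> weak_hub V A {v}"
proof -
  assume v: "v \<in> V"
  obtain x where x: "(x, v) \<in> A \<longleftrightarrow> (v, x) \<notin> A" using one_way[OF v] by blast
  then have "x \<in> V" using digraph_arcD[OF digraph] by blast
  moreover have "strongly_connected {v} A" unfolding strongly_connected_def by simp
  ultimately show ?thesis unfolding weak_hub_def inN_def outN_def using v x by blast
qed

lemma in_some_hub:
  assumes v: "v \<in> V"
  obtains X where "X \<in> hubs" "v \<in> X"
proof -
  define H where "H = {X. weak_hub V A X \<and> v \<in> X}"
  have "H \<subseteq> Pow V" unfolding H_def weak_hub_def by blast
  then have "finite H" using digraph unfolding digraph_def by (meson finite_Pow_iff finite_subset)
  moreover have "{v} \<in> H" unfolding H_def using singleton_weak_hub[OF v] by simp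
  ultimately obtain X where X: "X \<in> H" "\<And>Y. Y \<in> H \<Longrightarrow> X \<subseteq> Y \<Longrightarrow> X = Y"
    using finite_has_maximal by (metis empty_iff)
  then have "maximal_weak_hub V A X" unfolding maximal_weak_hub_def H_def by blast
  then show ?thesis using that X(1) unfolding hubs_def H_def by blast
qed

lemma Union_hubs: "\<Union>hubs = V"
  using hub_subset in_some_hub by blast

lemma hubs_disjoint: "X \<in> hubs \<Longrightarrow> Y \<in> hubs \<Longrightarrow> X \<noteq> Y \<Longrightarrow> X \<inter> Y = {}"
  using nonmixed_strongly_connected_nested[OF digraph semicomplete]
    hub_strongly_connected hub_nonmixed hub_maximal hub_weak_hub
  by (metis disjoint_iff)

lemma finite_hubs: "finite hubs"
  using hub_subset digraph unfolding digraph_def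
  by (meson Pow_iff finite_Pow_iff finite_subset subsetI)

lemma hub_arcs_complete:
  assumes "(X, Y) \<in> hub_arcs" "u \<in> X" "w \<in> Y"
  shows "(u, w) \<in> A \<and> (w, u) \<notin> A"
proof -
  obtain a b where "X \<in> hubs" "Y \<in> hubs" "X \<noteq> Y" "(a, b) \<in> A" "a \<in> X" "b \<in> Y"
    using assms(1) unfolding contract_arcs_def by blast
  then show ?thesis
    using nonmixed_arc_complete[OF digraph semicomplete hub_strongly_connected hub_nonmixed
        hub_strongly_connected hub_nonmixed hubs_disjoint] assms(2,3) by blast
qed

lemma oriented_hub_arcs: "oriented hub_arcs"
  unfolding oriented_def
proof (intro allI impI notI)
  fix X Y assume "(X, Y) \<in> hub_arcs" "(Y, X) \<in> hub_arcs"
  moreover obtain x y where "x \<in> X" "y \<in> Y"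
    using \<open>(X, Y) \<in> hub_arcs\<close> hub_nonempty unfolding contract_arcs_def by blast
  ultimately show False using hub_arcs_complete by blast
qed

lemma locally_semicomplete_hub_arcs: "locally_semicomplete hubs hub_arcs"
proof -
  have "(Y, Z) \<in> hub_arcs \<or> (Z, Y) \<in> hub_arcs"
    if X: "X \<in> hubs" and "Y \<noteq> Z"
      and arcs: "(X, Y) \<in> hub_arcs \<and> (X, Z) \<in> hub_arcs \<or> (Y, X) \<in> hub_arcs \<and> (Z, X) \<in> hub_arcs"
    for X Y Z
  proof -
    have YZ: "Y \<in> hubs" "Z \<in> hubs" using arcs unfolding contract_arcs_def by blast+
    obtain x y z where "x \<in> X" "y \<in> Y" "z \<in> Z" using X YZ hub_nonempty by (meson ex_in_conv)
    moreover have "x \<in> V" using hub_subset[OF X] \<open>x \<in> X\<close> by blast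
    moreover have "y \<noteq> z" using hubs_disjoint[OF YZ \<open>Y \<noteq> Z\<close>] \<open>y \<in> Y\<close> \<open>z \<in> Z\<close> by blast
    ultimately have "(y, z) \<in> A \<or> (z, y) \<in> A"
      using arcs hub_arcs_complete
        locally_semicomplete_outD[OF semicomplete] locally_semicomplete_inD[OF semicomplete]
      by meson
    then show ?thesis
      unfolding contract_arcs_def using YZ \<open>Y \<noteq> Z\<close> \<open>y \<in> Y\<close> \<open>z \<in> Z\<close> by blast
  qed
  then show ?thesis unfolding locally_semicomplete_def semicomplete_def outN_def inN_def by blast
qed

lemma hub_triangle_not_in_neighbourhood:
  assumes cycle: "(Y1, Y2) \<in> hub_arcs" "(Y2, Y3) \<in> hub_arcs" "(Y3, Y1) \<in> hub_arcs"
    and x: "x \<in> V" "Y1 \<union> Y2 \<union> Y3 \<subseteq> outN A x - inN A x \<or> Y1 \<union> Y2 \<union> Y3 \<subseteq> inN A x - outN A x"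
  shows False
proof -
  have Y: "Y1 \<in> hubs" "Y2 \<in> hubs" "Y3 \<in> hubs" "Y1 \<noteq> Y2"
    using cycle unfolding contract_arcs_def by blast+
  obtain a1 b2 where "(a1, b2) \<in> A" "a1 \<in> Y1" "b2 \<in> Y2" using cycle(1)
    unfolding contract_arcs_def by blast
  moreover obtain a2 b3 where "(a2, b3) \<in> A" "a2 \<in> Y2" "b3 \<in> Y3" using cycle(2)
    unfolding contract_arcs_def by blast
  moreover obtain a3 b1 where "(a3, b1) \<in> A" "a3 \<in> Y3" "b1 \<in> Y1" using cycle(3)
    unfolding contract_arcs_def by blast
  ultimately have "strongly_connected (Y1 \<union> Y2 \<union> Y3) A"
    using strongly_connected_cycle3[OF hub_strongly_connected[OF Y(1)]
        hub_strongly_connected[OF Y(2)] hub_strongly_connected[OF Y(3)]]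
    by blast
  moreover have "Y1 \<union> Y2 \<union> Y3 \<subseteq> V" using hub_subset Y(1-3) by blast
  ultimately have "weak_hub V A (Y1 \<union> Y2 \<union> Y3)"
    unfolding weak_hub_def using x by blast
  then have "Y2 \<subseteq> Y1" using hub_maximal[OF Y(1)] by blast
  then show False using hubs_disjoint[OF Y(1,2,4)] hub_nonempty[OF Y(2)] by blast
qed

lemma hub_arc_out_neighbourhood: "(X, Y) \<in> hub_arcs \<Longrightarrow> x \<in> X \<Longrightarrow> Y \<subseteq> outN A x - inN A x"
  using hub_arcs_complete unfolding outN_def inN_def by blast

lemma hub_arc_in_neighbourhood: "(Y, X) \<in> hub_arcs \<Longrightarrow> x \<in> X \<Longrightarrow> Y \<subseteq> inN A x - outN A x"
  using hub_arcs_complete unfolding outN_def inN_def by blast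

lemma hub_arc_endpoint_vertex:
  assumes "(X, Y) \<in> hub_arcs \<or> (Y, X) \<in> hub_arcs"
  obtains x where "x \<in> X" "x \<in> V"
proof -
  have "X \<in> hubs" using assms unfolding contract_arcs_def by blast
  then show ?thesis using that hub_nonempty hub_subset by blast
qed

lemma locally_transitive_hub_arcs: "locally_transitive hub_arcs"
  unfolding locally_transitive_def
proof (intro allI impI conjI notI)
  fix X Y1 Y2 Y3
  assume "(Y1, Y2) \<in> hub_arcs \<and> (Y2, Y3) \<in> hub_arcs \<and> (Y3, Y1) \<in> hub_arcs"
  then have cycle: "(Y1, Y2) \<in> hub_arcs" "(Y2, Y3) \<in> hub_arcs" "(Y3, Y1) \<in> hub_arcs" by blast+
  show False if out: "{Y1, Y2, Y3} \<subseteq> outN hub_arcs X"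
  proof -
    have arcs: "(X, Y1) \<in> hub_arcs" "(X, Y2) \<in> hub_arcs" "(X, Y3) \<in> hub_arcs"
      using out unfolding outN_def by blast+
    obtain x where "x \<in> X" "x \<in> V" using hub_arc_endpoint_vertex arcs(1) by blast
    then show False
      using hub_triangle_not_in_neighbourhood[OF cycle] hub_arc_out_neighbourhood[OF arcs(1)]
        hub_arc_out_neighbourhood[OF arcs(2)] hub_arc_out_neighbourhood[OF arcs(3)]
          by (meson Un_least)
  qed
  show False if "{Y1, Y2, Y3} \<subseteq> inN hub_arcs X"
  proof -
    have arcs: "(Y1, X) \<in> hub_arcs" "(Y2, X) \<in> hub_arcs" "(Y3, X) \<in> hub_arcs"
      using that unfolding inN_def by blast+
    obtain x where "x \<in> X" "x \<in> V" using hub_arc_endpoint_vertex arcs(1) by blast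
    then show False
      using hub_triangle_not_in_neighbourhood[OF cycle] hub_arc_in_neighbourhood[OF arcs(1)]
        hub_arc_in_neighbourhood[OF arcs(2)] hub_arc_in_neighbourhood[OF arcs(3)]
          by (meson Un_least)
  qed
qed

lemma round_hub_arcs: "round hubs hub_arcs"
proof (rule round_if_locally_transitive[OF finite_hubs _ oriented_hub_arcs
      locally_semicomplete_hub_arcs locally_transitive_hub_arcs])
  show "hub_arcs \<subseteq> hubs \<times> hubs" unfolding contract_arcs_def by blast
  have "A \<subseteq> V \<times> V" using digraph unfolding digraph_def by blast
  moreover have "\<forall>X\<in>hubs. \<forall>Y\<in>hubs. X \<noteq> Y \<longrightarrow> X \<inter> Y = {}" using hubs_disjoint by blast
  moreover have "{} \<notin> hubs" using hub_nonempty by blast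
  ultimately show "connected_dg hubs hub_arcs"
    by (rule connected_contract_arcs[OF connected _ Union_hubs])
qed

lemma two_le_card_hubs: "2 \<le> card hubs"
proof (rule ccontr)
  assume "\<not> 2 \<le> card hubs"
  moreover have "hubs \<noteq> {}" using Union_hubs connected unfolding connected_dg_def by blast
  then have "0 < card hubs" using finite_hubs by (simp add: card_gt_0_iff)
  ultimately have "card hubs = 1" by linarith
  then obtain X where "hubs = {X}" using card_1_singletonE by blast
  then have "weak_hub V A V" using Union_hubs hub_weak_hub by auto
  then obtain x where "x \<in> V" "V \<subseteq> inN A x - outN A x \<or> V \<subseteq> outN A x - inN A x"
    unfolding weak_hub_def by blast
  then show False using digraph_irrefl[OF digraph] unfolding inN_def outN_def by blast
qed

end

subsection \<open>Vertices incident only with digons\<close>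

lemma digon_vertex_dominates:
  assumes digraph: "digraph V A" and "connected_dg V A" and semicomplete: "locally_semicomplete V A"
    and v: "v \<in> V" and digon: "\<And>x. (x, v) \<in> A \<longleftrightarrow> (v, x) \<in> A"
    and w: "w \<in> V" "w \<noteq> v"
  shows "(v, w) \<in> A"
proof -
  have "z = v \<or> (v, z) \<in> A" if "(v, z) \<in> (A \<union> A\<inverse>)\<^sup>*" for z
    using that
  proof (induction rule: rtrancl_induct)
    case (step y z)
    show ?case
    proof (cases "y = v \<or> z = v")
      case False
      then have vy: "(v, y) \<in> A" "(y, v) \<in> A" "y \<in> V" using step.IH digon digraph_arcD[OF digraph]
        by blast+
      have "(v, z) \<in> A \<or> (z, v) \<in> A"
        using step.hyps(2) False locally_semicomplete_outD[OF semicomplete vy(3) vy(2)]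
          locally_semicomplete_inD[OF semicomplete vy(3) vy(1)] by blast
      then show ?thesis using digon by blast
    qed (use step.hyps(2) digon in blast)
  qed simp
  moreover have "(v, w) \<in> (A \<union> A\<inverse>)\<^sup>*" using assms(2) v w(1) unfolding connected_dg_def by blast
  ultimately show ?thesis using w(2) by blast
qed

lemma semicomplete_universal_if_digon_vertex:
  assumes digraph: "digraph V A" and "connected_dg V A" and semicomplete: "locally_semicomplete V A"
    and v: "v \<in> V" and digon: "\<And>x. (x, v) \<in> A \<longleftrightarrow> (v, x) \<in> A"
  shows "semicomplete V A \<and> universal_vertex V A v"
proof -
  have all: "(v, w) \<in> A \<and> (w, v) \<in> A" if "w \<in> V" "w \<noteq> v" for w
    using digon_vertex_dominates[OF assms that] digon by blast
  have "universal_vertex V A v"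
    unfolding universal_vertex_def outN_def inN_def
    using v all digraph_arcD[OF digraph] digraph_irrefl[OF digraph] by blast
  moreover have "semicomplete V A"
    unfolding semicomplete_def
    using all locally_semicomplete_outD[OF semicomplete v] by metis
  ultimately show ?thesis by blast
qed

theorem lemma4p3:
  fixes V :: "'a set" and A :: "('a \<times> 'a) set"
  assumes "digraph V A"
    and "connected_dg V A"
    and "locally_semicomplete V A"
    and "\<forall>X. maximal_weak_hub V A X \<longrightarrow> \<not> mixed V A X"
  shows "(semicomplete V A \<and> (\<exists>x. universal_vertex V A x)) \<or>
         (\<exists>P :: 'a set set. card P \<ge> 2 \<and> \<Union>P = V \<and>
            (\<forall>X\<in>P. \<forall>Y\<in>P. X \<noteq> Y \<longrightarrow> X \<inter> Y = {}) \<and>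
            (\<forall>X\<in>P. strongly_connected X A) \<and>
            round P (contract_arcs P A))"
proof (cases "\<exists>v\<in>V. \<forall>x. (x, v) \<in> A \<longleftrightarrow> (v, x) \<in> A")
  case True
  then obtain v where v: "v \<in> V" and digon: "\<And>x. (x, v) \<in> A \<longleftrightarrow> (v, x) \<in> A" by blast
  then show ?thesis using semicomplete_universal_if_digon_vertex[OF assms(1-3) v digon] by blast
next
  case False
  interpret nonmixed_hubs V A
  proof
    show "\<And>v. v \<in> V \<Longrightarrow> \<exists>x. (x, v) \<in> A \<longleftrightarrow> (v, x) \<notin> A" using False by blast
  qed (use assms in blast)+
  have "\<forall>X\<in>hubs. \<forall>Y\<in>hubs. X \<noteq> Y \<longrightarrow> X \<inter> Y = {}" "\<forall>X\<in>hubs. strongly_connected X A"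
    using hubs_disjoint hub_strongly_connected by blast+
  with two_le_card_hubs Union_hubs round_hub_arcs show ?thesis
    by (intro disjI2 exI[of _ hubs]) blast
qed

end
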